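(* For $A=(a_{ij}) \in {\operatorname{\mathsf{TPD}}}_n(\mathbb{S}_{\max}^{\vee})$ with the diagonal elements $d_n \leq \cdots \leq d_1$ we have \[ P_A = \bigoplus_{k=0}^{n} \bigg((\ominus \mathbf{1})^{n-k} (\prod_{i\in [n-k]}d_i)\bigg)\mathsf{X}^{k}\enspace .\]
   Context: $\mathbb{S}_{\max}$ is the symmetrized tropical semiring over a divisible totally ordered abelian group, with zero $\mathbf{0}$, unit $\mathbf{1}$, minus $\ominus$; $\mathbb{S}_{\max}^\vee$ is the set of signed elements. $A\in{\operatorname{\mathsf{TPD}}}_n(\mathbb{S}_{\max}^\vee)$: $A$ symmetric with signed entries, $\mathbf{0}<x^TAx$ for all nonzero signed vectors $x$ (equivalently $\mathbf{0}<a_{ii}$, $a_{ij}^2<a_{ii}a_{jj}$ for $i\ne j$), where $a<b$ iff $b\ominus a$ is positive. $P_A=\det(\mathsf{X} I\ominus A)$ is the formal characteristic polynomial over $\mathbb{S}_{\max}$ (signed determinant, expanded formally). $[m]=\{1,\dots,m\}$, and the empty product ($[0]$) equals $\mathbf{1}$. *)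

theory Defs
  imports "HOL-Combinatorics.Permutations" "HOL-Computational_Algebra.Polynomial"
begin

text \<open>Signs: positive, negative (minus), balanced.\<close>
datatype sgn3 = SP | SN | SB

fun sjoin :: "sgn3 \<Rightarrow> sgn3 \<Rightarrow> sgn3" where
  "sjoin SP SP = SP" | "sjoin SN SN = SN" | "sjoin _ _ = SB"

fun smul :: "sgn3 \<Rightarrow> sgn3 \<Rightarrow> sgn3" where
  "smul SP t = t" | "smul SN SP = SN" | "smul SN SN = SP" | "smul _ _ = SB"

fun sflip :: "sgn3 \<Rightarrow> sgn3" where
  "sflip SP = SN" | "sflip SN = SP" | "sflip SB = SB"

text \<open>Elements: the zero (tropical -infinity) or a modulus in the group with a sign.
  Tropical multiplication is the group addition, tropical unit is the group zero.\<close>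
datatype 'a smax = SZero | SE 'a sgn3

instantiation smax :: (linordered_ab_group_add) comm_semiring_1
begin

definition zero_smax :: "'a smax" where "zero_smax = SZero"
definition one_smax :: "'a smax" where "one_smax = SE 0 SP"

fun plus_smax :: "'a smax \<Rightarrow> 'a smax \<Rightarrow> 'a smax" where
  "plus_smax SZero y = y"
| "plus_smax (SE a s) SZero = SE a s"
| "plus_smax (SE a s) (SE b t) =
     (if b < a then SE a s else if a < b then SE b t else SE a (sjoin s t))"

fun times_smax :: "'a smax \<Rightarrow> 'a smax \<Rightarrow> 'a smax" where
  "times_smax SZero y = SZero"
| "times_smax (SE a s) SZero = SZero"
| "times_smax (SE a s) (SE b t) = SE (a + b) (smul s t)"

lemma sjoin_comm: "sjoin s t = sjoin t s" by (cases s; cases t; simp)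
lemma sjoin_assoc: "sjoin (sjoin s t) u = sjoin s (sjoin t u)" by (cases s; cases t; cases u; simp)
lemma sjoin_idem: "sjoin s s = s" by (cases s; simp)
lemma smul_comm: "smul s t = smul t s" by (cases s; cases t; simp)
lemma smul_assoc: "smul (smul s t) u = smul s (smul t u)" by (cases s; cases t; cases u; simp)
lemma smul_distrib: "smul s (sjoin t u) = sjoin (smul s t) (smul s u)"
  by (cases s; cases t; cases u; simp)

instance
proof
  fix x y z :: "'a smax"
  show "x + y + z = x + (y + z)"
    by (cases x; cases y; cases z; auto simp: sjoin_assoc)
  show "x + y = y + x"
    by (cases x; cases y; auto simp: sjoin_comm)
  show "0 + x = x" by (simp add: zero_smax_def)
  show "x * y * z = x * (y * z)"
    by (cases x; cases y; cases z; auto simp: smul_assoc add.assoc)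
  show "x * y = y * x"
    by (cases x; cases y; auto simp: smul_comm add.commute)
  show "1 * x = x" by (cases x; simp add: one_smax_def)
  show "(x + y) * z = x * z + y * z"
    by (cases x; cases y; cases z; auto simp: smul_comm smul_distrib)
  show "0 * x = 0" by (simp add: zero_smax_def)
  show "x * 0 = 0" by (cases x; simp add: zero_smax_def)
  show "(0::'a smax) \<noteq> 1" by (simp add: zero_smax_def one_smax_def)
qed

end

fun sneg :: "'a smax \<Rightarrow> 'a smax" where
  "sneg SZero = SZero" | "sneg (SE a s) = SE a (sflip s)"

definition sminus :: "'a::linordered_ab_group_add smax \<Rightarrow> 'a smax \<Rightarrow> 'a smax" where
  "sminus a b = a + sneg b"

definition spositive :: "'a smax \<Rightarrow> bool" where
  "spositive x \<longleftrightarrow> (\<exists>a. x = SE a SP)"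

definition ssigned :: "'a smax \<Rightarrow> bool" where
  "ssigned x \<longleftrightarrow> x = SZero \<or> (\<exists>a s. x = SE a s \<and> s \<noteq> SB)"

definition slt :: "'a::linordered_ab_group_add smax \<Rightarrow> 'a smax \<Rightarrow> bool" where
  "slt a b \<longleftrightarrow> spositive (sminus b a)"

definition sle :: "'a::linordered_ab_group_add smax \<Rightarrow> 'a smax \<Rightarrow> bool" where
  "sle a b \<longleftrightarrow> slt a b \<or> a = b"

text \<open>n x n matrices are functions on indices 0..n-1.
  TPD_n(S_max^\<or>): symmetric, signed entries, 0 < x^T A x for every nonzero signed vector x.\<close>
definition TPD :: "nat \<Rightarrow> (nat \<Rightarrow> nat \<Rightarrow> 'a::linordered_ab_group_add smax) \<Rightarrow> bool" where
  "TPD n A \<longleftrightarrow>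
     (\<forall>i<n. \<forall>j<n. A i j = A j i \<and> ssigned (A i j)) \<and>
     (\<forall>x :: nat \<Rightarrow> 'a smax. (\<forall>i<n. ssigned (x i)) \<and> (\<exists>i<n. x i \<noteq> 0) \<longrightarrow>
        slt 0 (\<Sum>i<n. \<Sum>j<n. x i * A i j * x j))"

definition sdet :: "nat \<Rightarrow> (nat \<Rightarrow> nat \<Rightarrow> 'a::linordered_ab_group_add smax poly) \<Rightarrow> 'a smax poly" where
  "sdet n M = (\<Sum>p | p permutes {..<n}.
      smult (if evenperm p then 1 else sneg 1) (\<Prod>i<n. M i (p i)))"

definition charpoly :: "nat \<Rightarrow> (nat \<Rightarrow> nat \<Rightarrow> 'a::linordered_ab_group_add smax) \<Rightarrow> 'a smax poly" where
  "charpoly n A = sdet n (\<lambda>i j. (if i = j then monom 1 1 else 0) + [:sneg (A i j):])"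

end

theory Submission
  imports Defs
begin

text \<open>Expanding \<open>det(X I \<ominus> A)\<close>, the coefficient of \<open>X\<^sup>n\<^sup>-\<^sup>m\<close> is the tropical sum, over
  permutations \<open>p\<close> and \<open>m\<close>-sets \<open>T\<close> outside of which \<open>p\<close> is the identity, of the terms
  \<open>sgn p \<Prod>\<^sub>i\<^sub>\<in>\<^sub>T \<ominus>a\<^sub>i\<^sub>,\<^sub>p\<^sub>(\<^sub>i\<^sub>)\<close>. For a TPD matrix, \<open>a\<^sub>i\<^sub>j\<^sup>2 < a\<^sub>i\<^sub>i a\<^sub>j\<^sub>j\<close> makes the modulus of every
  term with \<open>p \<noteq> id\<close> strictly smaller than that of the diagonal term \<open>\<Prod>\<^sub>i\<^sub>\<in>\<^sub>T \<ominus>a\<^sub>i\<^sub>i\<close>, so these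
  terms are absorbed. The diagonal terms all carry the sign \<open>(\<ominus>1)\<^sup>m\<close>, and the largest of them is
  the product of the \<open>m\<close> largest diagonal entries \<open>d\<^sub>1, \<dots>, d\<^sub>m\<close>.\<close>

lemma sum_absorbed:
  fixes f :: "'b \<Rightarrow> 'a::comm_monoid_add"
  assumes "finite I" "\<And>i. i \<in> I \<Longrightarrow> f i + c = c"
  shows "sum f I + c = c"
  using assms by (induction I rule: finite_induct) (simp_all add: add.assoc)

lemma sum_eq_absorbing:
  fixes f :: "'b \<Rightarrow> 'a::comm_monoid_add"
  assumes "finite I" "i0 \<in> I" "f i0 = c" "\<And>i. i \<in> I \<Longrightarrow> f i + c = c"
  shows "sum f I = c"
proof -
  have "sum f I = sum f (I - {i0}) + c"
    using assms(1-3) by (simp add: sum.remove add.commute)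
  also have "\<dots> = c"
    using assms by (intro sum_absorbed) auto
  finally show ?thesis .
qed

lemma sum_supported_on_two:
  assumes "finite S" "i \<in> S" "j \<in> S" "i \<noteq> j" "\<And>b. b \<in> S - {i, j} \<Longrightarrow> g b = 0"
  shows "sum g S = g i + g j"
proof -
  have "sum g S = sum g {i, j}"
    using assms by (intro sum.mono_neutral_right) auto
  then show ?thesis
    using assms(4) by simp
qed

lemma sum_le_sum_card_eq:
  fixes f :: "'b \<Rightarrow> 'a::ordered_comm_monoid_add"
  assumes "finite T" "finite U" "card T = card U"
    and "\<And>x y. x \<in> T - U \<Longrightarrow> y \<in> U - T \<Longrightarrow> f x \<le> f y"
  shows "sum f T \<le> sum f U"
proof -
  have "card (T - U) = card (U - T)"
    using assms(1-3) by (simp add: card_Diff_subset_Int Int_commute)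
  then obtain g where g: "bij_betw g (T - U) (U - T)"
    using assms(1,2) finite_same_card_bij by blast
  have "sum f (T - U) \<le> sum (f \<circ> g) (T - U)"
    by (rule sum_mono) (use g assms(4) in \<open>auto dest: bij_betwE\<close>)
  also have "\<dots> = sum f (U - T)"
    using sum.reindex_bij_betw[OF g] by simp
  finally have "sum f (T \<inter> U) + sum f (T - U) \<le> sum f (U \<inter> T) + sum f (U - T)"
    by (simp add: Int_commute add_left_mono)
  then show ?thesis
    using assms(1,2) by (simp add: sum.Int_Diff[symmetric])
qed

lemma sum_le_sum_initial_permuted:
  fixes f :: "nat \<Rightarrow> 'a::ordered_comm_monoid_add"
  assumes \<sigma>: "\<sigma> permutes {..<n}"
    and anti: "\<And>i j. i \<le> j \<Longrightarrow> j < n \<Longrightarrow> f (\<sigma> j) \<le> f (\<sigma> i)"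
    and T: "T \<subseteq> {..<n}" "card T = m"
  shows "sum f T \<le> (\<Sum>i<m. f (\<sigma> i))"
proof -
  have inj: "inj_on \<sigma> {..<m}"
    using permutes_inj_on[OF \<sigma>] .
  have "sum f T \<le> sum f (\<sigma> ` {..<m})"
  proof (rule sum_le_sum_card_eq)
    show "finite T"
      using T finite_subset by blast
    show "card T = card (\<sigma> ` {..<m})"
      using T card_image[OF inj] by simp
  next
    fix x y
    assume x: "x \<in> T - \<sigma> ` {..<m}" and y: "y \<in> \<sigma> ` {..<m} - T"
    then obtain i where i: "i < m" "y = \<sigma> i"
      by auto
    obtain j where j: "j < n" "x = \<sigma> j"
      using x T permutes_image[OF \<sigma>] by blast
    with x have "j \<notin> {..<m}"
      by blast
    with i have "i \<le> j"
      by simp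
    then show "f x \<le> f y"
      using anti i j by blast
  qed simp
  also have "\<dots> = (\<Sum>i<m. f (\<sigma> i))"
    using sum.reindex[OF inj] by simp
  finally show ?thesis .
qed

lemma add_self_le_imp_le: "(a::'a::linordered_ab_group_add) + a \<le> b + b \<Longrightarrow> a \<le> b"
  by (meson add_strict_mono not_le)

lemma add_self_less_imp_less: "(a::'a::linordered_ab_group_add) + a < b + b \<Longrightarrow> a < b"
  by (meson add_mono not_le)

lemma prod_if_X:
  assumes "finite B"
  shows "(\<Prod>i\<in>B. if P i then monom (1::'a::comm_semiring_1) 1 else 0) =
    (if \<forall>i\<in>B. P i then monom 1 (card B) else 0)"
proof (cases "\<forall>i\<in>B. P i")
  case True
  then have "(\<Prod>i\<in>B. if P i then monom (1::'a) 1 else 0) = (\<Prod>i\<in>B. monom 1 1)"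
    by (intro prod.cong) auto
  then show ?thesis
    using True by (simp add: monom_power)
next
  case False
  then obtain i where "i \<in> B" "\<not> P i"
    by blast
  then show ?thesis
    using assms by (auto intro!: prod_zero bexI[of _ i])
qed

lemma coeff_prod_if_X_plus_const:
  fixes c :: "'b \<Rightarrow> 'a::comm_semiring_1"
  assumes "finite I"
  shows "coeff (\<Prod>i\<in>I. (if P i then monom 1 1 else 0) + [:c i:]) k =
    (\<Sum>B\<in>Pow I. if (\<forall>i\<in>B. P i) \<and> card B = k then \<Prod>i\<in>I - B. c i else 0)"
proof -
  have "(\<Prod>i\<in>I. (if P i then monom 1 1 else 0) + [:c i:]) =
      (\<Sum>B\<in>Pow I. (\<Prod>i\<in>B. if P i then monom 1 1 else 0) * (\<Prod>i\<in>I - B. [:c i:]))"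
    using assms by (rule prod_add)
  also have "\<dots> = (\<Sum>B\<in>Pow I. (if \<forall>i\<in>B. P i then monom 1 (card B) else 0) * [:\<Prod>i\<in>I - B. c i:])"
    using assms by (intro sum.cong refl) (auto simp: prod_if_X prod_to_poly finite_subset)
  finally show ?thesis
    by (auto simp: coeff_sum coeff_monom_mult intro!: sum.cong)
qed

lemma coeff_charpoly:
  "coeff (charpoly n A) k = (\<Sum>p | p permutes {..<n}. \<Sum>B\<in>Pow {..<n}.
     if (\<forall>i\<in>B. i = p i) \<and> card B = k
     then (if evenperm p then 1 else sneg 1) * (\<Prod>i\<in>{..<n} - B. sneg (A i (p i))) else 0)"
  unfolding charpoly_def sdet_def coeff_sum coeff_smult coeff_prod_if_X_plus_const[OF finite_lessThan]
  by (simp add: sum_distrib_left if_distrib[of "(*) _"] cong: if_cong)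

lemma coeff_charpoly_eq_0:
  assumes "n < k"
  shows "coeff (charpoly n A) k = 0"
proof -
  have "card B \<noteq> k" if "B \<in> Pow {..<n}" for B
    using card_mono[of "{..<n}" B] that assms by auto
  then show ?thesis
    by (simp add: coeff_charpoly)
qed

text \<open>The value at \<open>SZero\<close> is junk; the modulus is only used for nonzero elements.\<close>
fun smodulus :: "'a smax \<Rightarrow> 'a::zero" where
  "smodulus SZero = 0"
| "smodulus (SE a s) = a"

lemma smodulus_sneg [simp]: "smodulus (sneg x) = smodulus x"
  by (cases x) auto

lemma sneg_0 [simp]: "sneg 0 = (0::'a::linordered_ab_group_add smax)"
  by (simp add: zero_smax_def)

lemma sneg_eq_0_iff [simp]: "sneg x = 0 \<longleftrightarrow> x = (0::'a::linordered_ab_group_add smax)"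
  by (cases x) (auto simp: zero_smax_def)

lemma sneg_eq_mult: "sneg x = sneg 1 * (x::'a::linordered_ab_group_add smax)"
proof -
  have "sflip s = smul SN s" for s
    by (cases s) auto
  then show ?thesis
    by (cases x) (auto simp: one_smax_def zero_smax_def)
qed

lemma sneg_one_power:
  "(sneg 1 :: 'a::linordered_ab_group_add smax) ^ m = SE 0 (if even m then SP else SN)"
  by (induction m) (auto simp: one_smax_def)

lemma prod_SE_SP:
  assumes "finite T" "\<And>i. i \<in> T \<Longrightarrow> f i = SE (a i) SP"
  shows "prod f T = SE (sum a T) SP"
  using assms by (induction T rule: finite_induct) (simp_all add: one_smax_def)

lemma prod_nonzero_eq_SE:
  fixes f :: "'b \<Rightarrow> 'a::linordered_ab_group_add smax"
  assumes "finite T" "\<And>i. i \<in> T \<Longrightarrow> f i \<noteq> 0"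
  shows "\<exists>s. prod f T = SE (\<Sum>i\<in>T. smodulus (f i)) s"
  using assms
proof (induction T rule: finite_induct)
  case empty
  then show ?case by (simp add: one_smax_def)
next
  case (insert x F)
  then obtain s where "prod f F = SE (\<Sum>i\<in>F. smodulus (f i)) s"
    by auto
  moreover obtain a t where "f x = SE a t"
    using insert.prems by (cases "f x") (auto simp: zero_smax_def)
  ultimately show ?case
    using insert.hyps by auto
qed

lemma SE_add_absorbed_less: "a < M \<Longrightarrow> SE a s + SE M t = SE M (t::sgn3)"
  by auto

lemma SE_add_absorbed_le: "a \<le> M \<Longrightarrow> SE a s + SE M s = SE M (s::sgn3)"
  by (auto simp: sjoin_idem)

lemma slt_0_iff: "slt 0 x \<longleftrightarrow> spositive (x::'a::linordered_ab_group_add smax)"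
  by (simp add: slt_def sminus_def)

lemma sle_SE_SP_imp_le: "sle (SE a SP) (SE b SP) \<Longrightarrow> (a::'a::linordered_ab_group_add) \<le> b"
  by (cases "a < b"; cases "b < a") (auto simp: sle_def slt_def sminus_def spositive_def)

lemma TPD_diag:
  assumes "TPD n A" "i < n"
  shows "A i i = SE (smodulus (A i i)) SP"
proof -
  define x :: "nat \<Rightarrow> 'a smax" where "x = (\<lambda>a. if a = i then 1 else 0)"
  have "(\<forall>a<n. ssigned (x a)) \<and> (\<exists>a<n. x a \<noteq> 0)"
    using assms(2) by (auto simp: x_def ssigned_def one_smax_def zero_smax_def)
  then have "slt 0 (\<Sum>a<n. \<Sum>b<n. x a * A a b * x b)"
    using assms(1) unfolding TPD_def by blast
  moreover have "x a * A a b * x b = (if b = i then if a = i then A i i else 0 else 0)" for a b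
    by (simp add: x_def)
  then have "(\<Sum>a<n. \<Sum>b<n. x a * A a b * x b) = A i i"
    using assms(2) by simp
  ultimately show ?thesis
    by (auto simp: slt_0_iff spositive_def)
qed

lemma TPD_offdiag_modulus_less:
  fixes A :: "nat \<Rightarrow> nat \<Rightarrow> 'a::linordered_ab_group_add smax"
  assumes halvable: "\<And>x::'a. \<exists>y. y + y = x"
    and tpd: "TPD n A" and ij: "i < n" "j < n" "i \<noteq> j" and nz: "A i j \<noteq> 0"
  shows "smodulus (A i j) + smodulus (A i j) < smodulus (A i i) + smodulus (A j j)"
proof (rule ccontr)
  define \<alpha> \<beta> \<gamma> where "\<alpha> = smodulus (A i i)" and "\<beta> = smodulus (A j j)" and "\<gamma> = smodulus (A i j)"
  assume "\<not> \<gamma> + \<gamma> < \<alpha> + \<beta>"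
  then have le: "\<alpha> + \<beta> \<le> \<gamma> + \<gamma>"
    by simp
  obtain t where Aij: "A i j = SE \<gamma> t"
    using nz by (cases "A i j") (auto simp: \<gamma>_def zero_smax_def)
  have "A j i = A i j" "ssigned (A i j)"
    using tpd ij unfolding TPD_def by auto
  with Aij have Aji: "A j i = SE \<gamma> t" and t: "t \<noteq> SB"
    by (auto simp: ssigned_def)
  have Aii: "A i i = SE \<alpha> SP" and Ajj: "A j j = SE \<beta> SP"
    using TPD_diag[OF tpd] ij by (auto simp: \<alpha>_def \<beta>_def)
  \<comment> \<open>Test the form at \<open>x\<^sub>i = \<surd>(a\<^sub>j\<^sub>j / a\<^sub>i\<^sub>i)\<close>, \<open>x\<^sub>j = \<ominus>sign a\<^sub>i\<^sub>j\<close>: both diagonal terms are \<open>a\<^sub>j\<^sub>j\<close>,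
    and both cross terms are negative with modulus \<open>x\<^sub>i |a\<^sub>i\<^sub>j| \<ge> a\<^sub>j\<^sub>j\<close>, so the form is not positive.\<close>
  obtain y where y: "y + y = \<beta> - \<alpha>"
    using halvable by blast
  then have y\<alpha>y: "y + \<alpha> + y = \<beta>"
    by (simp add: algebra_simps)
  have "\<beta> + \<beta> \<le> (y + \<gamma>) + (y + \<gamma>)"
    using y le by (metis add.assoc add.commute add_le_cancel_left diff_add_cancel)
  then have cross_ge: "\<beta> \<le> y + \<gamma>"
    by (rule add_self_le_imp_le)
  define x :: "nat \<Rightarrow> 'a smax"
    where "x = (\<lambda>a. if a = i then SE y SP else if a = j then SE 0 (sflip t) else 0)"
  have "(\<forall>a<n. ssigned (x a)) \<and> (\<exists>a<n. x a \<noteq> 0)"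
    using ij t by (cases t) (auto simp: x_def ssigned_def zero_smax_def)
  then have pos: "spositive (\<Sum>a<n. \<Sum>b<n. x a * A a b * x b)"
    using tpd unfolding TPD_def by (simp add: slt_0_iff)
  have "(\<Sum>a<n. \<Sum>b<n. x a * A a b * x b) =
      (x i * A i i * x i + x i * A i j * x j) + (x j * A j i * x i + x j * A j j * x j)"
  proof -
    have "(\<Sum>b<n. x a * A a b * x b) = x a * A a i * x i + x a * A a j * x j" for a
      by (rule sum_supported_on_two) (use ij in \<open>auto simp: x_def\<close>)
    moreover have "(\<Sum>a<n. x a * A a i * x i + x a * A a j * x j) =
        (x i * A i i * x i + x i * A i j * x j) + (x j * A j i * x i + x j * A j j * x j)"
      by (rule sum_supported_on_two) (use ij in \<open>auto simp: x_def\<close>)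
    ultimately show ?thesis
      by simp
  qed
  also have "\<dots> = (SE \<beta> SP + SE (y + \<gamma>) SN) + (SE (y + \<gamma>) SN + SE \<beta> SP)"
    using t ij Aij Aji Aii Ajj y\<alpha>y by (cases t) (simp_all add: x_def add.commute add.left_commute)
  finally have pos_four_terms: "spositive ((SE \<beta> SP + SE (y + \<gamma>) SN) + (SE (y + \<gamma>) SN + SE \<beta> SP))"
    using pos by simp
  from cross_ge consider "\<beta> < y + \<gamma>" "\<not> y + \<gamma> < \<beta>" | "\<beta> = y + \<gamma>"
    by (auto simp: le_less)
  then show False
    using pos_four_terms by cases (simp_all add: spositive_def)
qed

lemma TPD_prod_sneg_diag:
  assumes tpd: "TPD n A" and T: "T \<subseteq> {..<n}"
  shows "(\<Prod>i\<in>T. sneg (A i i)) = sneg 1 ^ card T * SE (\<Sum>i\<in>T. smodulus (A i i)) SP"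
proof -
  have "sneg (A i i) = sneg 1 * SE (smodulus (A i i)) SP" if "i \<in> T" for i
    using TPD_diag[OF tpd] that T by (metis sneg_eq_mult subsetD lessThan_iff)
  then have "(\<Prod>i\<in>T. sneg (A i i)) = (\<Prod>i\<in>T. sneg 1 * SE (smodulus (A i i)) SP)"
    by (rule prod.cong[OF refl])
  also have "\<dots> = sneg 1 ^ card T * SE (\<Sum>i\<in>T. smodulus (A i i)) SP"
    using finite_subset[OF T] by (simp add: prod.distrib prod_SE_SP)
  finally show ?thesis .
qed

lemma permutation_term_modulus_less:
  fixes A :: "nat \<Rightarrow> nat \<Rightarrow> 'a::linordered_ab_group_add smax"
  assumes halvable: "\<And>x::'a. \<exists>y. y + y = x" and tpd: "TPD n A"
    and T: "T \<subseteq> {..<n}" and p: "p permutes T" "p \<noteq> id"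
    and nz: "\<And>i. i \<in> T \<Longrightarrow> A i (p i) \<noteq> 0"
  shows "(\<Sum>i\<in>T. smodulus (A i (p i))) < (\<Sum>i\<in>T. smodulus (A i i))"
proof -
  define g h where "g i = smodulus (A i (p i))" and "h i = smodulus (A i i)" for i
  have fin: "finite T"
    using T finite_subset by blast
  have less: "g i + g i < h i + h (p i)" if "i \<in> T" "p i \<noteq> i" for i
    using TPD_offdiag_modulus_less[OF halvable tpd, of i "p i"] that nz[of i] T
      permutes_in_image[OF p(1), of i] by (auto simp: g_def h_def)
  have le: "g i + g i \<le> h i + h (p i)" if "i \<in> T" for i
    using less[OF that] by (cases "p i = i") (auto simp: g_def h_def)
  obtain i0 where "p i0 \<noteq> i0"
    using p(2) by (metis eq_id_iff)
  then have "i0 \<in> T"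
    using permutes_not_in[OF p(1)] by blast
  have "sum g T + sum g T = (\<Sum>i\<in>T. g i + g i)"
    by (simp add: sum.distrib)
  also have "\<dots> < (\<Sum>i\<in>T. h i + h (p i))"
    using fin le less \<open>i0 \<in> T\<close> \<open>p i0 \<noteq> i0\<close> by (intro sum_strict_mono_ex1) auto
  also have "\<dots> = sum h T + sum h T"
    using sum.permute[OF p(1), of h] by (simp add: sum.distrib)
  finally show ?thesis
    unfolding g_def h_def by (rule add_self_less_imp_less)
qed

lemma permutation_term_absorbed:
  fixes A :: "nat \<Rightarrow> nat \<Rightarrow> 'a::linordered_ab_group_add smax"
  assumes halvable: "\<And>x::'a. \<exists>y. y + y = x" and tpd: "TPD n A"
    and T: "T \<subseteq> {..<n}" "card T = m" and p: "p permutes T"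
    and diag_le: "(\<Sum>i\<in>T. smodulus (A i i)) \<le> M"
  shows "(if evenperm p then 1 else sneg 1) * (\<Prod>i\<in>T. sneg (A i (p i))) + sneg 1 ^ m * SE M SP
    = sneg 1 ^ m * SE M SP"
proof -
  have fin: "finite T"
    using T finite_subset by blast
  consider "p = id" | "p \<noteq> id" "\<exists>i\<in>T. A i (p i) = 0" | "p \<noteq> id" "\<forall>i\<in>T. A i (p i) \<noteq> 0"
    by blast
  then show ?thesis
  proof cases
    case 1
    then have "(\<Prod>i\<in>T. sneg (A i (p i))) = sneg 1 ^ m * SE (\<Sum>i\<in>T. smodulus (A i i)) SP"
      using TPD_prod_sneg_diag[OF tpd T(1)] T(2) by simp
    then have "(if evenperm p then 1 else sneg 1) * (\<Prod>i\<in>T. sneg (A i (p i))) + sneg 1 ^ m * SE M SP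
        = sneg 1 ^ m * SE (\<Sum>i\<in>T. smodulus (A i i)) SP + sneg 1 ^ m * SE M SP"
      using 1 by (simp only: evenperm_id if_True mult_1_left)
    also have "\<dots> = sneg 1 ^ m * (SE (\<Sum>i\<in>T. smodulus (A i i)) SP + SE M SP)"
      by (rule distrib_left[symmetric])
    also have "SE (\<Sum>i\<in>T. smodulus (A i i)) SP + SE M SP = SE M SP"
      by (rule SE_add_absorbed_le[OF diag_le])
    finally show ?thesis .
  next
    case 2
    then have "(\<Prod>i\<in>T. sneg (A i (p i))) = 0"
      using fin by (intro prod_zero) auto
    then show ?thesis
      by simp
  next
    case 3
    obtain s where s: "(\<Prod>i\<in>T. sneg (A i (p i))) = SE (\<Sum>i\<in>T. smodulus (A i (p i))) s"
      using prod_nonzero_eq_SE[OF fin, of "\<lambda>i. sneg (A i (p i))"] 3(2) by auto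
    have lt: "(\<Sum>i\<in>T. smodulus (A i (p i))) < M"
      using permutation_term_modulus_less[OF halvable tpd T(1) p 3(1)] 3(2) diag_le by auto
    obtain s' where "(if evenperm p then 1 else sneg 1) * (\<Prod>i\<in>T. sneg (A i (p i)))
        = SE (\<Sum>i\<in>T. smodulus (A i (p i))) s'"
      using s by (cases "evenperm p") (auto simp: one_smax_def)
    moreover have "sneg 1 ^ m * SE M SP = SE M (if even m then SP else SN)"
      by (simp add: sneg_one_power)
    ultimately show ?thesis
      by (simp only: SE_add_absorbed_less[OF lt])
  qed
qed

lemma coeff_charpoly_TPD_max:
  fixes A :: "nat \<Rightarrow> nat \<Rightarrow> 'a::linordered_ab_group_add smax"
  assumes halvable: "\<And>x::'a. \<exists>y. y + y = x" and tpd: "TPD n A" and "m \<le> n"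
    and max: "\<And>T. T \<subseteq> {..<n} \<Longrightarrow> card T = m \<Longrightarrow> (\<Sum>i\<in>T. smodulus (A i i)) \<le> M"
    and attained: "T0 \<subseteq> {..<n}" "card T0 = m" "(\<Sum>i\<in>T0. smodulus (A i i)) = M"
  shows "coeff (charpoly n A) (n - m) = sneg 1 ^ m * SE M SP"
proof -
  let ?c = "sneg 1 ^ m * SE M SP :: 'a smax"
  define summand where "summand p B = (if (\<forall>i\<in>B. i = p i) \<and> card B = n - m
    then (if evenperm p then 1 else sneg 1) * (\<Prod>i\<in>{..<n} - B. sneg (A i (p i))) else 0)" for p B
  have absorbed: "summand p B + ?c = ?c" if p: "p permutes {..<n}" and B: "B \<subseteq> {..<n}" for p B
  proof (cases "(\<forall>i\<in>B. i = p i) \<and> card B = n - m")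
    case True
    have "card ({..<n} - B) = m"
      using True \<open>m \<le> n\<close> by (simp add: card_Diff_subset[OF finite_subset[OF B] B])
    moreover have "p permutes {..<n} - B"
      using True by (intro permutes_superset[OF p]) auto
    ultimately have "(if evenperm p then 1 else sneg 1) * (\<Prod>i\<in>{..<n} - B. sneg (A i (p i))) + ?c = ?c"
      using permutation_term_absorbed[OF halvable tpd _ _ _ max] by blast
    then show ?thesis
      using True by (simp add: summand_def)
  next
    case False
    then have "summand p B = 0"
      unfolding summand_def by (rule if_not_P)
    then show ?thesis
      by simp
  qed
  have diag_term: "summand id ({..<n} - T0) = ?c"
  proof -
    have "card ({..<n} - T0) = n - m"
      using attained by (simp add: card_Diff_subset[OF finite_subset[OF attained(1)]])
    moreover have "{..<n} - ({..<n} - T0) = T0"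
      using attained(1) by blast
    ultimately have "summand id ({..<n} - T0) = (\<Prod>i\<in>T0. sneg (A i i))"
      by (simp add: summand_def evenperm_id)
    also have "\<dots> = ?c"
      using TPD_prod_sneg_diag[OF tpd attained(1)] attained(2,3) by simp
    finally show ?thesis .
  qed
  have "coeff (charpoly n A) (n - m) = (\<Sum>p | p permutes {..<n}. \<Sum>B\<in>Pow {..<n}. summand p B)"
    by (simp add: coeff_charpoly summand_def)
  also have "\<dots> = ?c"
  proof (rule sum_eq_absorbing[of _ id])
    show "(\<Sum>B\<in>Pow {..<n}. summand id B) = ?c"
    proof (rule sum_eq_absorbing[of _ "{..<n} - T0"])
      show "summand id B + ?c = ?c" if "B \<in> Pow {..<n}" for B
        using that by (intro absorbed permutes_id) blast
    qed (use diag_term in simp_all)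
    show "(\<Sum>B\<in>Pow {..<n}. summand p B) + ?c = ?c" if "p \<in> {p. p permutes {..<n}}" for p
    proof (rule sum_absorbed)
      show "summand p B + ?c = ?c" if "B \<in> Pow {..<n}" for B
        using that \<open>p \<in> {p. p permutes {..<n}}\<close> by (intro absorbed) blast+
    qed simp
  qed (simp_all add: finite_permutations permutes_id)
  finally show ?thesis .
qed

lemma coeff_charpoly_TPD_sorted:
  fixes A :: "nat \<Rightarrow> nat \<Rightarrow> 'a::linordered_ab_group_add smax"
  assumes halvable: "\<And>x::'a. \<exists>y. y + y = x" and tpd: "TPD n A" and \<sigma>: "\<sigma> permutes {..<n}"
    and sorted: "\<And>i j. i \<le> j \<Longrightarrow> j < n \<Longrightarrow> smodulus (A (\<sigma> j) (\<sigma> j)) \<le> smodulus (A (\<sigma> i) (\<sigma> i))"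
    and "m \<le> n"
  shows "coeff (charpoly n A) (n - m) = sneg 1 ^ m * SE (\<Sum>i<m. smodulus (A (\<sigma> i) (\<sigma> i))) SP"
proof (rule coeff_charpoly_TPD_max[OF halvable tpd \<open>m \<le> n\<close>])
  show "(\<Sum>i\<in>T. smodulus (A i i)) \<le> (\<Sum>i<m. smodulus (A (\<sigma> i) (\<sigma> i)))"
    if "T \<subseteq> {..<n}" "card T = m" for T
    using sum_le_sum_initial_permuted[OF \<sigma> _ that, of "\<lambda>i. smodulus (A i i)"] sorted by simp
  have inj: "inj_on \<sigma> {..<m}"
    using permutes_inj_on[OF \<sigma>] .
  have "\<sigma> ` {..<m} \<subseteq> \<sigma> ` {..<n}"
    using \<open>m \<le> n\<close> by (intro image_mono) auto
  then show "\<sigma> ` {..<m} \<subseteq> {..<n}"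
    by (simp add: permutes_image[OF \<sigma>])
  show "card (\<sigma> ` {..<m}) = m"
    using card_image[OF inj] by simp
  show "(\<Sum>i\<in>\<sigma> ` {..<m}. smodulus (A i i)) = (\<Sum>i<m. smodulus (A (\<sigma> i) (\<sigma> i)))"
    using sum.reindex[OF inj] by simp
qed

theorem corollary4p7:
  fixes A :: "nat \<Rightarrow> nat \<Rightarrow> 'a::linordered_ab_group_add smax"
    and n :: nat and d :: "nat \<Rightarrow> 'a smax" and \<sigma> :: "nat \<Rightarrow> nat"
  assumes divisible: "\<forall>(x::'a) (m::nat). 0 < m \<longrightarrow> (\<exists>y. (\<Sum>i<m. y) = x)"
    and tpd: "TPD n A"
    and perm: "\<sigma> permutes {..<n}"
    and diag: "\<forall>i<n. d i = A (\<sigma> i) (\<sigma> i)"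
    and sorted: "\<forall>i j. i \<le> j \<and> j < n \<longrightarrow> sle (d j) (d i)"
  shows "charpoly n A = (\<Sum>k\<le>n. monom ((sneg 1) ^ (n - k) * (\<Prod>i<n - k. d i)) k)"
proof -
  have halvable: "\<exists>y. y + y = x" for x :: 'a
    using divisible[rule_format, of 2 x] by (simp add: numeral_2_eq_2)
  have d: "d i = SE (smodulus (A (\<sigma> i) (\<sigma> i))) SP" if "i < n" for i
    using diag TPD_diag[OF tpd] permutes_in_image[OF perm] that by simp
  have anti: "smodulus (A (\<sigma> j) (\<sigma> j)) \<le> smodulus (A (\<sigma> i) (\<sigma> i))" if "i \<le> j" "j < n" for i j
  proof -
    have "sle (d j) (d i)"
      using sorted that by blast
    then show ?thesis
      using d[of i] d[of j] that by (metis le_less_trans sle_SE_SP_imp_le)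
  qed
  show ?thesis
  proof (rule poly_eqI)
    fix k
    show "coeff (charpoly n A) k = coeff (\<Sum>k\<le>n. monom ((sneg 1) ^ (n - k) * (\<Prod>i<n - k. d i)) k) k"
    proof (cases "k \<le> n")
      case True
      have "(\<Prod>i<n - k. d i) = SE (\<Sum>i<n - k. smodulus (A (\<sigma> i) (\<sigma> i))) SP"
        using d by (intro prod_SE_SP) auto
      then show ?thesis
        using coeff_charpoly_TPD_sorted[OF halvable tpd perm anti, of "n - k"] True
        by (simp add: coeff_sum coeff_monom)
    qed (simp add: coeff_charpoly_eq_0 coeff_sum coeff_monom)
  qed
qed

end
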